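(* Let $\mathbf L=(L,\vee,\wedge)$ be a partial lattice and $a,b,c,d\in L$. Then: (i) $\mathbf L^*=(L^*,\leq^* )$ is a lattice with lattice operations $x\vee^*y:=\sup_{\leq^*}(x,y)$ and $x\wedge^*y:=\inf_{\leq^*}(x,y)$ for $x,y\in L^*$; (ii) $a\vee b$ is defined in $\mathbf L$ and equals $c$ iff $a\vee^*b=c$; and $a\wedge b$ is defined in $\mathbf L$ and equals $d$ iff $a\wedge^*b=d$; (iii) $a\vee^*b=a\vee b$ if $U(a,b)\neq\emptyset$ and $a\vee^*b=1$ otherwise; $a\wedge^*b=a\wedge b$ if $L(a,b)\neq\emptyset$ and $a\wedge^*b=0$ otherwise.
   Context: A partial lattice is a set $L$ with two partial binary operations $\vee,\wedge$ satisfying strong idempotency, commutativity and associativity (for every assignment, one side is defined iff the other is, and then they are equal) and the duality conditions: if $a\vee b$ is defined and equals $a$ then $a\wedge b$ is defined and equals $b$, and dually. Its induced order is $x\leq y$ iff $x\vee y$ is defined and equals $y$ (iff $x\wedge y$ is defined and equals $x$). $U(a,b)$ and $L(a,b)$ denote the sets of common upper, resp. lower, bounds of $a,b$ in $(L,\leq)$. The two-point extension $\mathbf L^*=(L^*,\leq^* )$ of $\mathbf L$, with new elements $0,1\notin L$: $L^*=L$ if $\vee$ and $\wedge$ are both everywhere defined; $L^*=L\cup\{1\}$ if $\wedge$ is everywhere defined but $\vee$ is not; $L^*=L\cup\{0\}$ if $\vee$ is everywhere defined but $\wedge$ is not; $L^*=L\cup\{0,1\}$ if neither is everywhere defined. The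 order $\leq^*$ on $L^*$ is $\leq$ together with $0\leq^* x$ and $x\leq^* 1$ for all $x\in L^*$ (whenever $0$, resp. $1$, belongs to $L^*$). *)

theory Defs
  imports Main
begin

text \<open>A partial lattice on carrier L: partial operations are modelled as
  option-valued functions; only their behaviour on L matters.\<close>

definition partial_lattice ::
  "'a set \<Rightarrow> ('a \<Rightarrow> 'a \<Rightarrow> 'a option) \<Rightarrow> ('a \<Rightarrow> 'a \<Rightarrow> 'a option) \<Rightarrow> bool" where
  "partial_lattice L J M \<longleftrightarrow>
     (\<forall>x\<in>L. \<forall>y\<in>L. \<forall>z. J x y = Some z \<longrightarrow> z \<in> L) \<and>
     (\<forall>x\<in>L. \<forall>y\<in>L. \<forall>z. M x y = Some z \<longrightarrow> z \<in> L) \<and>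
     (\<forall>x\<in>L. J x x = Some x) \<and>
     (\<forall>x\<in>L. M x x = Some x) \<and>
     (\<forall>x\<in>L. \<forall>y\<in>L. J x y = J y x) \<and>
     (\<forall>x\<in>L. \<forall>y\<in>L. M x y = M y x) \<and>
     (\<forall>x\<in>L. \<forall>y\<in>L. \<forall>z\<in>L.
        Option.bind (J x y) (\<lambda>u. J u z) = Option.bind (J y z) (\<lambda>v. J x v)) \<and>
     (\<forall>x\<in>L. \<forall>y\<in>L. \<forall>z\<in>L.
        Option.bind (M x y) (\<lambda>u. M u z) = Option.bind (M y z) (\<lambda>v. M x v)) \<and>
     (\<forall>a\<in>L. \<forall>b\<in>L. J a b = Some a \<longrightarrow> M a b = Some b) \<and>
     (\<forall>a\<in>L. \<forall>b\<in>L. M a b = Some a \<longrightarrow> J a b = Some b)"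

definition pleq :: "('a \<Rightarrow> 'a \<Rightarrow> 'a option) \<Rightarrow> 'a \<Rightarrow> 'a \<Rightarrow> bool" where
  "pleq J x y \<longleftrightarrow> J x y = Some y"

definition upper_bounds :: "'a set \<Rightarrow> ('a \<Rightarrow> 'a \<Rightarrow> 'a option) \<Rightarrow> 'a \<Rightarrow> 'a \<Rightarrow> 'a set" where
  "upper_bounds L J a b = {u \<in> L. pleq J a u \<and> pleq J b u}"

definition lower_bounds :: "'a set \<Rightarrow> ('a \<Rightarrow> 'a \<Rightarrow> 'a option) \<Rightarrow> 'a \<Rightarrow> 'a \<Rightarrow> 'a set" where
  "lower_bounds L J a b = {u \<in> L. pleq J u a \<and> pleq J u b}"

datatype 'a ext = Zero | Elem 'a | One

definition ext_carrier ::
  "'a set \<Rightarrow> ('a \<Rightarrow> 'a \<Rightarrow> 'a option) \<Rightarrow> ('a \<Rightarrow> 'a \<Rightarrow> 'a option) \<Rightarrow> 'a ext set" where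
  "ext_carrier L J M =
     Elem ` L
     \<union> (if \<forall>x\<in>L. \<forall>y\<in>L. M x y \<noteq> None then {} else {Zero})
     \<union> (if \<forall>x\<in>L. \<forall>y\<in>L. J x y \<noteq> None then {} else {One})"

fun ext_le :: "('a \<Rightarrow> 'a \<Rightarrow> 'a option) \<Rightarrow> 'a ext \<Rightarrow> 'a ext \<Rightarrow> bool" where
  "ext_le J Zero _ = True"
| "ext_le J _ One = True"
| "ext_le J (Elem x) (Elem y) = pleq J x y"
| "ext_le J _ _ = False"

definition is_lub :: "'b set \<Rightarrow> ('b \<Rightarrow> 'b \<Rightarrow> bool) \<Rightarrow> 'b \<Rightarrow> 'b \<Rightarrow> 'b \<Rightarrow> bool" where
  "is_lub S R x y z \<longleftrightarrow> z \<in> S \<and> R x z \<and> R y z \<and> (\<forall>w\<in>S. R x w \<and> R y w \<longrightarrow> R z w)"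

definition is_glb :: "'b set \<Rightarrow> ('b \<Rightarrow> 'b \<Rightarrow> bool) \<Rightarrow> 'b \<Rightarrow> 'b \<Rightarrow> 'b \<Rightarrow> bool" where
  "is_glb S R x y z \<longleftrightarrow> z \<in> S \<and> R z x \<and> R z y \<and> (\<forall>w\<in>S. R w x \<and> R w y \<longrightarrow> R w z)"

definition lattice_on :: "'b set \<Rightarrow> ('b \<Rightarrow> 'b \<Rightarrow> bool) \<Rightarrow> bool" where
  "lattice_on S R \<longleftrightarrow>
     (\<forall>x\<in>S. R x x) \<and>
     (\<forall>x\<in>S. \<forall>y\<in>S. R x y \<and> R y x \<longrightarrow> x = y) \<and>
     (\<forall>x\<in>S. \<forall>y\<in>S. \<forall>z\<in>S. R x y \<and> R y z \<longrightarrow> R x z) \<and>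
     (\<forall>x\<in>S. \<forall>y\<in>S. \<exists>z. is_lub S R x y z) \<and>
     (\<forall>x\<in>S. \<forall>y\<in>S. \<exists>z. is_glb S R x y z)"

definition sup_star ::
  "'a set \<Rightarrow> ('a \<Rightarrow> 'a \<Rightarrow> 'a option) \<Rightarrow> ('a \<Rightarrow> 'a \<Rightarrow> 'a option) \<Rightarrow> 'a ext \<Rightarrow> 'a ext \<Rightarrow> 'a ext" where
  "sup_star L J M x y = (THE z. is_lub (ext_carrier L J M) (ext_le J) x y z)"

definition inf_star ::
  "'a set \<Rightarrow> ('a \<Rightarrow> 'a \<Rightarrow> 'a option) \<Rightarrow> ('a \<Rightarrow> 'a \<Rightarrow> 'a option) \<Rightarrow> 'a ext \<Rightarrow> 'a ext \<Rightarrow> 'a ext" where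
  "inf_star L J M x y = (THE z. is_glb (ext_carrier L J M) (ext_le J) x y z)"

end

theory Submission
  imports Defs
begin

text \<open>In a partial lattice, associativity makes \<open>x \<le> u\<close> and \<open>y \<le> u\<close> force \<open>x \<or> y\<close> to be
  defined and below \<open>u\<close>; so \<open>x \<or> y\<close> is defined exactly when \<open>x, y\<close> have a common upper bound,
  and it is then their least one. Dually for \<open>\<and>\<close>. Adjoining a top \<open>1\<close> (a bottom \<open>0\<close>) whenever
  \<open>\<or>\<close> (\<open>\<and>\<close>) is not total therefore supplies the missing suprema (infima), and \<open>L\<^sup>*\<close> is a
  lattice whose operations extend those of \<open>L\<close>.\<close>

lemma The_is_lub:
  assumes "\<And>u v. u \<in> S \<Longrightarrow> v \<in> S \<Longrightarrow> R u v \<Longrightarrow> R v u \<Longrightarrow> u = v"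
    and "is_lub S R x y z"
  shows "(THE z. is_lub S R x y z) = z"
  using assms unfolding is_lub_def by (blast intro: the_equality)

lemma The_is_glb:
  assumes "\<And>u v. u \<in> S \<Longrightarrow> v \<in> S \<Longrightarrow> R u v \<Longrightarrow> R v u \<Longrightarrow> u = v"
    and "is_glb S R x y z"
  shows "(THE z. is_glb S R x y z) = z"
  using assms unfolding is_glb_def by (blast intro: the_equality)

lemma ext_le_One [simp]: "ext_le J x One"
  by (cases x) auto

context
  fixes L :: "'a set" and J M :: "'a \<Rightarrow> 'a \<Rightarrow> 'a option"
  assumes partial_lattice: "partial_lattice L J M"
begin

lemma join_closed: "x \<in> L \<Longrightarrow> y \<in> L \<Longrightarrow> J x y = Some z \<Longrightarrow> z \<in> L"
  using partial_lattice unfolding partial_lattice_def by (elim conjE) metis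

lemma meet_closed: "x \<in> L \<Longrightarrow> y \<in> L \<Longrightarrow> M x y = Some z \<Longrightarrow> z \<in> L"
  using partial_lattice unfolding partial_lattice_def by (elim conjE) metis

lemma join_idem: "x \<in> L \<Longrightarrow> J x x = Some x"
  using partial_lattice unfolding partial_lattice_def by (elim conjE) metis

lemma meet_idem: "x \<in> L \<Longrightarrow> M x x = Some x"
  using partial_lattice unfolding partial_lattice_def by (elim conjE) metis

lemma join_commute: "x \<in> L \<Longrightarrow> y \<in> L \<Longrightarrow> J x y = J y x"
  using partial_lattice unfolding partial_lattice_def by (elim conjE) metis

lemma meet_commute: "x \<in> L \<Longrightarrow> y \<in> L \<Longrightarrow> M x y = M y x"
  using partial_lattice unfolding partial_lattice_def by (elim conjE) metis

lemma join_assoc: "x \<in> L \<Longrightarrow> y \<in> L \<Longrightarrow> z \<in> L \<Longrightarrow>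
    Option.bind (J x y) (\<lambda>u. J u z) = Option.bind (J y z) (\<lambda>v. J x v)"
  using partial_lattice unfolding partial_lattice_def by (elim conjE) metis

lemma meet_assoc: "x \<in> L \<Longrightarrow> y \<in> L \<Longrightarrow> z \<in> L \<Longrightarrow>
    Option.bind (M x y) (\<lambda>u. M u z) = Option.bind (M y z) (\<lambda>v. M x v)"
  using partial_lattice unfolding partial_lattice_def by (elim conjE) metis

lemma join_eq_left_imp_meet_eq_right: "x \<in> L \<Longrightarrow> y \<in> L \<Longrightarrow> J x y = Some x \<Longrightarrow> M x y = Some y"
  using partial_lattice unfolding partial_lattice_def by (elim conjE) metis

lemma meet_eq_left_imp_join_eq_right: "x \<in> L \<Longrightarrow> y \<in> L \<Longrightarrow> M x y = Some x \<Longrightarrow> J x y = Some y"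
  using partial_lattice unfolding partial_lattice_def by (elim conjE) metis

lemma pleq_iff_meet: "x \<in> L \<Longrightarrow> y \<in> L \<Longrightarrow> pleq J x y \<longleftrightarrow> M x y = Some x"
  unfolding pleq_def
  by (metis join_commute meet_commute join_eq_left_imp_meet_eq_right meet_eq_left_imp_join_eq_right)

lemma pleq_refl: "x \<in> L \<Longrightarrow> pleq J x x"
  unfolding pleq_def by (rule join_idem)

lemma pleq_antisym: "x \<in> L \<Longrightarrow> y \<in> L \<Longrightarrow> pleq J x y \<Longrightarrow> pleq J y x \<Longrightarrow> x = y"
  unfolding pleq_def by (metis join_commute option.inject)

lemma pleq_trans: "x \<in> L \<Longrightarrow> y \<in> L \<Longrightarrow> z \<in> L \<Longrightarrow> pleq J x y \<Longrightarrow> pleq J y z \<Longrightarrow> pleq J x z"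
  unfolding pleq_def using join_assoc[of x y z] by simp

lemma join_upper:
  assumes "x \<in> L" "y \<in> L" "J x y = Some z"
  shows "pleq J x z" "pleq J y z"
proof -
  show "pleq J x z"
    using join_assoc[of x x y] assms join_idem unfolding pleq_def by simp
  have "J y x = Some z" using assms join_commute by metis
  then show "pleq J y z"
    using join_assoc[of y y x] assms join_idem unfolding pleq_def by simp
qed

lemma join_least:
  "x \<in> L \<Longrightarrow> y \<in> L \<Longrightarrow> u \<in> L \<Longrightarrow> J x y = Some z \<Longrightarrow> pleq J x u \<Longrightarrow> pleq J y u \<Longrightarrow> pleq J z u"
  unfolding pleq_def using join_assoc[of x y u] by simp

lemma join_defined_if_upper_bound:
  "x \<in> L \<Longrightarrow> y \<in> L \<Longrightarrow> u \<in> L \<Longrightarrow> pleq J x u \<Longrightarrow> pleq J y u \<Longrightarrow> J x y \<noteq> None"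
  unfolding pleq_def using join_assoc[of x y u] by (cases "J x y") auto

lemma meet_lower:
  assumes "x \<in> L" "y \<in> L" "M x y = Some z"
  shows "pleq J z x" "pleq J z y"
proof -
  have z: "z \<in> L" using assms meet_closed by blast
  have "M x z = Some z" using meet_assoc[of x x y] assms meet_idem by simp
  then show "pleq J z x" using pleq_iff_meet assms z meet_commute by metis
  have "M y x = Some z" using assms meet_commute by metis
  then have "M y z = Some z" using meet_assoc[of y y x] assms meet_idem by simp
  then show "pleq J z y" using pleq_iff_meet assms z meet_commute by metis
qed

lemma meet_greatest:
  assumes "x \<in> L" "y \<in> L" "u \<in> L" "M x y = Some z" "pleq J u x" "pleq J u y"
  shows "pleq J u z"
proof -
  have "M u x = Some u" "M u y = Some u" using assms pleq_iff_meet by auto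
  then have "M u z = Some u" using meet_assoc[of u x y] assms by simp
  then show ?thesis using assms meet_closed pleq_iff_meet by blast
qed

lemma meet_defined_if_lower_bound:
  assumes "x \<in> L" "y \<in> L" "u \<in> L" "pleq J u x" "pleq J u y"
  shows "M x y \<noteq> None"
proof -
  have "M u x = Some u" "M u y = Some u" using assms pleq_iff_meet by auto
  then show ?thesis using meet_assoc[of u x y] assms by (cases "M x y") auto
qed

lemma upper_bounds_nonempty_iff:
  assumes "x \<in> L" "y \<in> L"
  shows "upper_bounds L J x y \<noteq> {} \<longleftrightarrow> J x y \<noteq> None"
proof
  assume "upper_bounds L J x y \<noteq> {}"
  then obtain u where "u \<in> L" "pleq J x u" "pleq J y u"
    unfolding upper_bounds_def by blast
  with assms show "J x y \<noteq> None" by (rule join_defined_if_upper_bound)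
next
  assume "J x y \<noteq> None"
  then obtain z where "J x y = Some z" by blast
  with assms have "z \<in> upper_bounds L J x y"
    unfolding upper_bounds_def using join_closed join_upper by blast
  then show "upper_bounds L J x y \<noteq> {}" by blast
qed

lemma lower_bounds_nonempty_iff:
  assumes "x \<in> L" "y \<in> L"
  shows "lower_bounds L J x y \<noteq> {} \<longleftrightarrow> M x y \<noteq> None"
proof
  assume "lower_bounds L J x y \<noteq> {}"
  then obtain u where "u \<in> L" "pleq J u x" "pleq J u y"
    unfolding lower_bounds_def by blast
  with assms show "M x y \<noteq> None" by (rule meet_defined_if_lower_bound)
next
  assume "M x y \<noteq> None"
  then obtain z where "M x y = Some z" by blast
  with assms have "z \<in> lower_bounds L J x y"
    unfolding lower_bounds_def using meet_closed meet_lower by blast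
  then show "lower_bounds L J x y \<noteq> {}" by blast
qed

lemma ext_carrier_cases:
  "z \<in> ext_carrier L J M \<Longrightarrow> z = Zero \<or> z = One \<or> (\<exists>a\<in>L. z = Elem a)"
  by (cases z) (auto simp: ext_carrier_def split: if_splits)

lemma Elem_in_ext_carrier [simp]: "Elem a \<in> ext_carrier L J M \<longleftrightarrow> a \<in> L"
  by (auto simp: ext_carrier_def split: if_splits)

lemma One_in_ext_carrier:
  assumes "x \<in> L" "y \<in> L" "J x y = None"
  shows "One \<in> ext_carrier L J M"
proof -
  have join_partial: "\<not> (\<forall>x\<in>L. \<forall>y\<in>L. J x y \<noteq> None)" using assms by blast
  show ?thesis unfolding ext_carrier_def if_not_P[OF join_partial] by blast
qed

lemma Zero_in_ext_carrier:
  assumes "x \<in> L" "y \<in> L" "M x y = None"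
  shows "Zero \<in> ext_carrier L J M"
proof -
  have meet_partial: "\<not> (\<forall>x\<in>L. \<forall>y\<in>L. M x y \<noteq> None)" using assms by blast
  show ?thesis unfolding ext_carrier_def if_not_P[OF meet_partial] by blast
qed

lemma ext_le_refl: "x \<in> ext_carrier L J M \<Longrightarrow> ext_le J x x"
  by (cases x) (auto intro: pleq_refl)

lemma ext_le_antisym:
  "x \<in> ext_carrier L J M \<Longrightarrow> y \<in> ext_carrier L J M \<Longrightarrow> ext_le J x y \<Longrightarrow> ext_le J y x \<Longrightarrow> x = y"
  by (cases x; cases y) (auto intro: pleq_antisym)

lemma ext_le_trans:
  "x \<in> ext_carrier L J M \<Longrightarrow> y \<in> ext_carrier L J M \<Longrightarrow> z \<in> ext_carrier L J M \<Longrightarrow>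
    ext_le J x y \<Longrightarrow> ext_le J y z \<Longrightarrow> ext_le J x z"
  by (cases x; cases y; cases z) (auto intro: pleq_trans)

lemma is_lub_Elem:
  assumes a: "a \<in> L" and b: "b \<in> L"
  shows "is_lub (ext_carrier L J M) (ext_le J) (Elem a) (Elem b)
           (case J a b of Some c \<Rightarrow> Elem c | None \<Rightarrow> One)"
proof (cases "J a b")
  case None
  have least: "ext_le J One w"
    if "w \<in> ext_carrier L J M" "ext_le J (Elem a) w" "ext_le J (Elem b) w" for w
    using ext_carrier_cases[OF that(1)] that(2,3) join_defined_if_upper_bound[OF a b] None by auto
  show ?thesis
    unfolding is_lub_def using None least One_in_ext_carrier[OF a b None] by simp
next
  case (Some c)
  have least: "ext_le J (Elem c) w"
    if "w \<in> ext_carrier L J M" "ext_le J (Elem a) w" "ext_le J (Elem b) w" for w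
    using ext_carrier_cases[OF that(1)] that(2,3) join_least[OF a b _ Some] by auto
  show ?thesis
    unfolding is_lub_def using Some least join_closed[OF a b Some] join_upper[OF a b Some] by simp
qed

lemma is_glb_Elem:
  assumes a: "a \<in> L" and b: "b \<in> L"
  shows "is_glb (ext_carrier L J M) (ext_le J) (Elem a) (Elem b)
           (case M a b of Some c \<Rightarrow> Elem c | None \<Rightarrow> Zero)"
proof (cases "M a b")
  case None
  have greatest: "ext_le J w Zero"
    if "w \<in> ext_carrier L J M" "ext_le J w (Elem a)" "ext_le J w (Elem b)" for w
    using ext_carrier_cases[OF that(1)] that(2,3) meet_defined_if_lower_bound[OF a b] None by auto
  show ?thesis
    unfolding is_glb_def using None greatest Zero_in_ext_carrier[OF a b None] by simp
next
  case (Some c)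
  have greatest: "ext_le J w (Elem c)"
    if "w \<in> ext_carrier L J M" "ext_le J w (Elem a)" "ext_le J w (Elem b)" for w
    using ext_carrier_cases[OF that(1)] that(2,3) meet_greatest[OF a b _ Some] by auto
  show ?thesis
    unfolding is_glb_def using Some greatest meet_closed[OF a b Some] meet_lower[OF a b Some] by simp
qed

lemma ext_lub_exists:
  assumes x: "x \<in> ext_carrier L J M" and y: "y \<in> ext_carrier L J M"
  shows "\<exists>z. is_lub (ext_carrier L J M) (ext_le J) x y z"
proof -
  consider "x = Zero" | "y = Zero" | "x = One" | "y = One"
    | a b where "x = Elem a" "y = Elem b" "a \<in> L" "b \<in> L"
    using ext_carrier_cases[OF x] ext_carrier_cases[OF y] by blast
  then show ?thesis
  proof cases
    case 1
    then show ?thesis using y ext_le_refl by (intro exI[of _ y]) (auto simp: is_lub_def)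
  next
    case 2
    then show ?thesis using x ext_le_refl by (intro exI[of _ x]) (auto simp: is_lub_def)
  next
    case 3
    then show ?thesis using x by (intro exI[of _ One]) (auto simp: is_lub_def)
  next
    case 4
    then show ?thesis using y by (intro exI[of _ One]) (auto simp: is_lub_def)
  next
    case 5
    then show ?thesis using is_lub_Elem by blast
  qed
qed

lemma ext_glb_exists:
  assumes x: "x \<in> ext_carrier L J M" and y: "y \<in> ext_carrier L J M"
  shows "\<exists>z. is_glb (ext_carrier L J M) (ext_le J) x y z"
proof -
  consider "x = One" | "y = One" | "x = Zero" | "y = Zero"
    | a b where "x = Elem a" "y = Elem b" "a \<in> L" "b \<in> L"
    using ext_carrier_cases[OF x] ext_carrier_cases[OF y] by blast
  then show ?thesis
  proof cases
    case 1
    then show ?thesis using y ext_le_refl by (intro exI[of _ y]) (auto simp: is_glb_def)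
  next
    case 2
    then show ?thesis using x ext_le_refl by (intro exI[of _ x]) (auto simp: is_glb_def)
  next
    case 3
    then show ?thesis using x by (intro exI[of _ Zero]) (auto simp: is_glb_def)
  next
    case 4
    then show ?thesis using y by (intro exI[of _ Zero]) (auto simp: is_glb_def)
  next
    case 5
    then show ?thesis using is_glb_Elem by blast
  qed
qed

lemma lattice_on_ext: "lattice_on (ext_carrier L J M) (ext_le J)"
  unfolding lattice_on_def
proof (intro conjI ballI impI)
  fix x y z
  assume "x \<in> ext_carrier L J M" "y \<in> ext_carrier L J M" "z \<in> ext_carrier L J M"
    and "ext_le J x y \<and> ext_le J y z"
  then show "ext_le J x z" by (blast intro: ext_le_trans)
qed (auto intro: ext_le_refl ext_le_antisym ext_lub_exists ext_glb_exists)

lemma sup_star_eq: "is_lub (ext_carrier L J M) (ext_le J) x y z \<Longrightarrow> sup_star L J M x y = z"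
  unfolding sup_star_def by (rule The_is_lub[OF ext_le_antisym])

lemma inf_star_eq: "is_glb (ext_carrier L J M) (ext_le J) x y z \<Longrightarrow> inf_star L J M x y = z"
  unfolding inf_star_def by (rule The_is_glb[OF ext_le_antisym])

lemma is_lub_sup_star:
  assumes "x \<in> ext_carrier L J M" "y \<in> ext_carrier L J M"
  shows "is_lub (ext_carrier L J M) (ext_le J) x y (sup_star L J M x y)"
proof -
  obtain z where "is_lub (ext_carrier L J M) (ext_le J) x y z"
    using ext_lub_exists[OF assms] ..
  then show ?thesis by (simp add: sup_star_eq)
qed

lemma is_glb_inf_star:
  assumes "x \<in> ext_carrier L J M" "y \<in> ext_carrier L J M"
  shows "is_glb (ext_carrier L J M) (ext_le J) x y (inf_star L J M x y)"
proof -
  obtain z where "is_glb (ext_carrier L J M) (ext_le J) x y z"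
    using ext_glb_exists[OF assms] ..
  then show ?thesis by (simp add: inf_star_eq)
qed

lemma sup_star_Elem:
  "a \<in> L \<Longrightarrow> b \<in> L \<Longrightarrow>
    sup_star L J M (Elem a) (Elem b) = (case J a b of Some c \<Rightarrow> Elem c | None \<Rightarrow> One)"
  by (rule sup_star_eq[OF is_lub_Elem])

lemma inf_star_Elem:
  "a \<in> L \<Longrightarrow> b \<in> L \<Longrightarrow>
    inf_star L J M (Elem a) (Elem b) = (case M a b of Some c \<Rightarrow> Elem c | None \<Rightarrow> Zero)"
  by (rule inf_star_eq[OF is_glb_Elem])

end

theorem mainTheorem3:
  fixes L :: "'a set" and J M :: "'a \<Rightarrow> 'a \<Rightarrow> 'a option" and a b c d :: 'a
  assumes "partial_lattice L J M"
    and "a \<in> L" and "b \<in> L" and "c \<in> L" and "d \<in> L"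
  shows "lattice_on (ext_carrier L J M) (ext_le J)
     \<and> (\<forall>x\<in>ext_carrier L J M. \<forall>y\<in>ext_carrier L J M.
          is_lub (ext_carrier L J M) (ext_le J) x y (sup_star L J M x y)
        \<and> is_glb (ext_carrier L J M) (ext_le J) x y (inf_star L J M x y))
     \<and> (J a b = Some c \<longleftrightarrow> sup_star L J M (Elem a) (Elem b) = Elem c)
     \<and> (M a b = Some d \<longleftrightarrow> inf_star L J M (Elem a) (Elem b) = Elem d)
     \<and> (upper_bounds L J a b \<noteq> {} \<longrightarrow>
          J a b \<noteq> None \<and> sup_star L J M (Elem a) (Elem b) = Elem (the (J a b)))
     \<and> (upper_bounds L J a b = {} \<longrightarrow> sup_star L J M (Elem a) (Elem b) = One)
     \<and> (lower_bounds L J a b \<noteq> {} \<longrightarrow>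
          M a b \<noteq> None \<and> inf_star L J M (Elem a) (Elem b) = Elem (the (M a b)))
     \<and> (lower_bounds L J a b = {} \<longrightarrow> inf_star L J M (Elem a) (Elem b) = Zero)"
proof -
  note pl = assms(1) and ab = assms(2,3)
  have sup_Elem: "sup_star L J M (Elem a) (Elem b) = (case J a b of Some c \<Rightarrow> Elem c | None \<Rightarrow> One)"
    and inf_Elem: "inf_star L J M (Elem a) (Elem b) = (case M a b of Some c \<Rightarrow> Elem c | None \<Rightarrow> Zero)"
    using sup_star_Elem[OF pl ab] inf_star_Elem[OF pl ab] .
  show ?thesis
    using lattice_on_ext[OF pl] is_lub_sup_star[OF pl] is_glb_inf_star[OF pl]
      upper_bounds_nonempty_iff[OF pl ab] lower_bounds_nonempty_iff[OF pl ab]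
    unfolding sup_Elem inf_Elem by (auto split: option.splits)
qed

end
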